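(* Let $\mathbf{S}$ be a distributive meet semilattice and $n\ge1$ an integer. Then the lattice $\mathrm{Fi}_n\mathbf{S}$ of all $n$-filters on $\mathbf{S}$, ordered by inclusion, is a distributive lattice.
   Context: A meet semilattice is distributive if whenever $x\wedge y\le z$ there are $x'\ge x$ and $y'\ge y$ with $x'\wedge y'=z$. For a set $X$, $Y\subseteq_n X$ means $Y$ is a non-empty subset of $X$ with $|Y|\le n$. An $n$-filter on $\mathbf{S}$ is an upset $F$ such that for every non-empty finite $X\subseteq F$: if $\bigwedge Y\in F$ for every $Y\subseteq_n X$ then $\bigwedge X\in F$. In $\mathrm{Fi}_n\mathbf{S}$ meets are intersections and the join of two $n$-filters is the $n$-filter generated by their union. *)

theory Defs
  imports Main
begin

definition distributive_msl :: "('a::semilattice_inf) itself \<Rightarrow> bool" where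
  "distributive_msl _ \<longleftrightarrow>
     (\<forall>x y z::'a. inf x y \<le> z \<longrightarrow> (\<exists>x' y'. x \<le> x' \<and> y \<le> y' \<and> inf x' y' = z))"

definition nfilter :: "nat \<Rightarrow> ('a::semilattice_inf) set \<Rightarrow> bool" where
  "nfilter n F \<longleftrightarrow>
     (\<forall>x\<in>F. \<forall>y. x \<le> y \<longrightarrow> y \<in> F) \<and>
     (\<forall>X. finite X \<and> X \<noteq> {} \<and> X \<subseteq> F \<longrightarrow>
        (\<forall>Y. Y \<noteq> {} \<and> Y \<subseteq> X \<and> card Y \<le> n \<longrightarrow> Inf_fin Y \<in> F) \<longrightarrow>
        Inf_fin X \<in> F)"

definition nfilter_gen :: "nat \<Rightarrow> ('a::semilattice_inf) set \<Rightarrow> 'a set" where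
  "nfilter_gen n A = \<Inter>{F. nfilter n F \<and> A \<subseteq> F}"

definition nfilter_join :: "nat \<Rightarrow> ('a::semilattice_inf) set \<Rightarrow> 'a set \<Rightarrow> 'a set" where
  "nfilter_join n F G = nfilter_gen n (F \<union> G)"

end

theory Submission
  imports Defs
begin

text \<open>The inclusion \<open>\<supseteq>\<close> in the distributive law is immediate. For the other
  inclusion fix \<open>x \<in> F\<close> and let \<open>J\<close> be the join of \<open>F \<inter> G\<close> and \<open>F \<inter> H\<close>. The elements
  \<open>a\<close> all of whose common upper bounds with \<open>x\<close> lie in \<open>J\<close> form an \<open>n\<close>-filter:
  distributivity of the semilattice lets us write any upper bound of a finite meet \<open>\<Sqinter>X\<close>
  as a meet of elements lying above the members of \<open>X\<close>, reducing the \<open>n\<close>-filter condition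
  to the one for \<open>J\<close>. This \<open>n\<close>-filter contains \<open>G\<close> and \<open>H\<close>, hence the join of \<open>G\<close> and
  \<open>H\<close>, and therefore \<open>x\<close> whenever \<open>x\<close> lies in that join.\<close>

lemma nfilter_upward:
  "nfilter n F \<Longrightarrow> a \<in> F \<Longrightarrow> a \<le> b \<Longrightarrow> b \<in> F"
  unfolding nfilter_def by blast

lemma nfilter_Inf_finI:
  assumes "nfilter n F" "finite X" "X \<noteq> {}" "X \<subseteq> F"
    and "\<And>Y. Y \<noteq> {} \<Longrightarrow> Y \<subseteq> X \<Longrightarrow> card Y \<le> n \<Longrightarrow> Inf_fin Y \<in> F"
  shows "Inf_fin X \<in> F"
proof -
  have "\<forall>X. finite X \<and> X \<noteq> {} \<and> X \<subseteq> F \<longrightarrow>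
      (\<forall>Y. Y \<noteq> {} \<and> Y \<subseteq> X \<and> card Y \<le> n \<longrightarrow> Inf_fin Y \<in> F) \<longrightarrow> Inf_fin X \<in> F"
    using assms(1) unfolding nfilter_def by (rule conjunct2)
  then show ?thesis
    using assms(2-5) by simp
qed

lemma nfilterI:
  assumes "\<And>a b. a \<in> F \<Longrightarrow> a \<le> b \<Longrightarrow> b \<in> F"
    and "\<And>X. finite X \<Longrightarrow> X \<noteq> {} \<Longrightarrow> X \<subseteq> F \<Longrightarrow>
           (\<And>Y. Y \<noteq> {} \<Longrightarrow> Y \<subseteq> X \<Longrightarrow> card Y \<le> n \<Longrightarrow> Inf_fin Y \<in> F) \<Longrightarrow> Inf_fin X \<in> F"
  shows "nfilter n F"
  unfolding nfilter_def
proof (intro conjI ballI allI impI)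
  show "b \<in> F" if "a \<in> F" "a \<le> b" for a b
    using that by (rule assms(1))
  show "Inf_fin X \<in> F"
    if X: "finite X \<and> X \<noteq> {} \<and> X \<subseteq> F"
      and small: "\<forall>Y. Y \<noteq> {} \<and> Y \<subseteq> X \<and> card Y \<le> n \<longrightarrow> Inf_fin Y \<in> F" for X
    using X small by (simp add: assms(2))
qed

lemma nfilter_Inter:
  assumes "\<And>F. F \<in> S \<Longrightarrow> nfilter n F"
  shows "nfilter n (\<Inter>S)"
proof (rule nfilterI)
  show "b \<in> \<Inter>S" if "a \<in> \<Inter>S" "a \<le> b" for a b
    using that assms nfilter_upward by blast
next
  fix X assume X: "finite X" "X \<noteq> {}" "X \<subseteq> \<Inter>S"
    and small: "\<And>Y. Y \<noteq> {} \<Longrightarrow> Y \<subseteq> X \<Longrightarrow> card Y \<le> n \<Longrightarrow> Inf_fin Y \<in> \<Inter>S"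
  show "Inf_fin X \<in> \<Inter>S"
  proof
    fix F assume F: "F \<in> S"
    show "Inf_fin X \<in> F"
    proof (rule nfilter_Inf_finI[OF assms[OF F] X(1,2)])
      show "X \<subseteq> F" using X(3) F by blast
      show "Inf_fin Y \<in> F" if "Y \<noteq> {}" "Y \<subseteq> X" "card Y \<le> n" for Y
        using small[OF that] F by blast
    qed
  qed
qed

lemma nfilter_Int: "nfilter n F \<Longrightarrow> nfilter n G \<Longrightarrow> nfilter n (F \<inter> G)"
  using nfilter_Inter[of "{F, G}"] by auto

lemma nfilter_nfilter_gen: "nfilter n (nfilter_gen n A)"
  unfolding nfilter_gen_def by (rule nfilter_Inter) auto

lemma nfilter_gen_subset: "A \<subseteq> nfilter_gen n A"
  unfolding nfilter_gen_def by auto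

lemma nfilter_gen_least: "nfilter n H \<Longrightarrow> A \<subseteq> H \<Longrightarrow> nfilter_gen n A \<subseteq> H"
  unfolding nfilter_gen_def by auto

lemma nfilter_nfilter_join: "nfilter n (nfilter_join n F G)"
  unfolding nfilter_join_def by (rule nfilter_nfilter_gen)

lemma nfilter_join_upper: "F \<subseteq> nfilter_join n F G" "G \<subseteq> nfilter_join n F G"
  unfolding nfilter_join_def using nfilter_gen_subset by blast+

lemma nfilter_join_least:
  "nfilter n H \<Longrightarrow> F \<subseteq> H \<Longrightarrow> G \<subseteq> H \<Longrightarrow> nfilter_join n F G \<subseteq> H"
  unfolding nfilter_join_def by (rule nfilter_gen_least) auto

lemma distributive_msl_Inf_fin:
  assumes D: "distributive_msl TYPE('a::semilattice_inf)"
    and "finite X" "X \<noteq> {}" "Inf_fin X \<le> (z::'a)"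
  shows "\<exists>g. (\<forall>x\<in>X. x \<le> g x) \<and> Inf_fin (g ` X) = z"
  using assms(2-4)
proof (induction X arbitrary: z rule: finite_ne_induct)
  case (singleton x)
  then show ?case by (intro exI[of _ "\<lambda>_. z"]) auto
next
  case (insert a X)
  have "inf a (Inf_fin X) \<le> z" using insert by simp
  then obtain a' m where a': "a \<le> a'" "Inf_fin X \<le> m" "inf a' m = z"
    using D unfolding distributive_msl_def by blast
  obtain g where g: "\<forall>x\<in>X. x \<le> g x" "Inf_fin (g ` X) = m"
    using insert.IH a'(2) by blast
  have "(g(a := a')) ` insert a X = insert a' (g ` X)"
    using insert.hyps(3) by (auto simp: image_def)
  moreover have "Inf_fin (insert a' (g ` X)) = z"
    using insert.hyps g(2) a'(3) by simp
  ultimately show ?case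
    using a'(1) g(1) insert.hyps(3) by (intro exI[of _ "g(a := a')"]) auto
qed

lemma Inf_fin_le_Inf_fin_image:
  fixes g :: "'a::semilattice_inf \<Rightarrow> 'a"
  assumes "finite Y" "Y \<noteq> {}" "\<And>y. y \<in> Y \<Longrightarrow> y \<le> g y"
  shows "Inf_fin Y \<le> Inf_fin (g ` Y)"
  using assms by (auto intro!: Inf_fin.boundedI intro: order_trans[OF Inf_fin.coboundedI])

text \<open>\<open>filter_residual J x\<close> stands for \<open>{a. a \<squnion> x \<in> J}\<close>, written without joins.\<close>

definition filter_residual :: "('a::semilattice_inf) set \<Rightarrow> 'a \<Rightarrow> 'a set" where
  "filter_residual J x = {a. \<forall>u. a \<le> u \<longrightarrow> x \<le> u \<longrightarrow> u \<in> J}"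

lemma nfilter_filter_residual:
  fixes x :: "'a::semilattice_inf"
  assumes D: "distributive_msl TYPE('a)" and J: "nfilter n J"
  shows "nfilter n (filter_residual J x)"
proof (rule nfilterI)
  show "b \<in> filter_residual J x" if "a \<in> filter_residual J x" "a \<le> b" for a b
    using that unfolding filter_residual_def by (auto intro: order_trans)
next
  fix X assume X: "finite X" "X \<noteq> {}" and X_res: "X \<subseteq> filter_residual J x"
    and small: "\<And>Y. Y \<noteq> {} \<Longrightarrow> Y \<subseteq> X \<Longrightarrow> card Y \<le> n \<Longrightarrow> Inf_fin Y \<in> filter_residual J x"
  show "Inf_fin X \<in> filter_residual J x"
    unfolding filter_residual_def
  proof (intro CollectI allI impI)
    fix u assume "Inf_fin X \<le> u" and xu: "x \<le> u"
    then obtain g where g: "\<forall>y\<in>X. y \<le> g y" and u: "Inf_fin (g ` X) = u"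
      using distributive_msl_Inf_fin[OF D X(1,2)] by blast
    have x_below: "x \<le> g y" if "y \<in> X" for y
      using that X u xu by (metis Inf_fin.coboundedI finite_imageI imageI order_trans)
    have "Inf_fin (g ` X) \<in> J"
    proof (rule nfilter_Inf_finI[OF J])
      show "finite (g ` X)" "g ` X \<noteq> {}" using X(1,2) by auto
      show "g ` X \<subseteq> J"
      proof
        fix b assume "b \<in> g ` X"
        then obtain y where y: "y \<in> X" "b = g y" by blast
        then have "y \<in> filter_residual J x" using X_res by blast
        then show "b \<in> J" using g x_below y unfolding filter_residual_def by blast
      qed
    next
      fix Y' assume Y': "Y' \<noteq> {}" "Y' \<subseteq> g ` X" "card Y' \<le> n"
      then obtain Y where Y: "Y \<subseteq> X" "inj_on g Y" "Y' = g ` Y"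
        unfolding subset_image_inj by blast
      with Y' have "Y \<noteq> {}" "card Y \<le> n"
        by (auto simp: card_image)
      have finY: "finite Y" using Y(1) X(1) finite_subset by blast
      have "Inf_fin Y \<le> Inf_fin Y'"
        using Y \<open>Y \<noteq> {}\<close> g finY by (auto intro!: Inf_fin_le_Inf_fin_image)
      moreover have "x \<le> Inf_fin Y'"
        using Y Y' x_below finY by (auto intro!: Inf_fin.boundedI)
      moreover have "Inf_fin Y \<in> filter_residual J x"
        using small Y(1) \<open>Y \<noteq> {}\<close> \<open>card Y \<le> n\<close> by blast
      ultimately show "Inf_fin Y' \<in> J" unfolding filter_residual_def by blast
    qed
    then show "u \<in> J" using u by simp
  qed
qed

lemma nfilter_Int_join_distrib:
  assumes D: "distributive_msl TYPE('a::semilattice_inf)"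
    and F: "nfilter n F" and G: "nfilter n G" and H: "nfilter n (H :: 'a set)"
  shows "F \<inter> nfilter_join n G H = nfilter_join n (F \<inter> G) (F \<inter> H)"
proof
  have "F \<inter> G \<subseteq> F \<inter> nfilter_join n G H" "F \<inter> H \<subseteq> F \<inter> nfilter_join n G H"
    using nfilter_join_upper[where F = G and G = H] by blast+
  then show "nfilter_join n (F \<inter> G) (F \<inter> H) \<subseteq> F \<inter> nfilter_join n G H"
    by (rule nfilter_join_least[OF nfilter_Int[OF F nfilter_nfilter_join]])
next
  let ?J = "nfilter_join n (F \<inter> G) (F \<inter> H)"
  show "F \<inter> nfilter_join n G H \<subseteq> ?J"
  proof
    fix x assume x: "x \<in> F \<inter> nfilter_join n G H"
    have "G \<union> H \<subseteq> filter_residual ?J x"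
      unfolding filter_residual_def
    proof (intro subsetI CollectI allI impI)
      fix a u assume a: "a \<in> G \<union> H" and au: "a \<le> u" and xu: "x \<le> u"
      have "u \<in> F" using x nfilter_upward[OF F _ xu] by blast
      moreover have "u \<in> G \<union> H"
        using a nfilter_upward[OF G _ au] nfilter_upward[OF H _ au] by blast
      ultimately show "u \<in> ?J" using nfilter_join_upper[where F = "F \<inter> G" and G = "F \<inter> H"] by blast
    qed
    then have "nfilter_join n G H \<subseteq> filter_residual ?J x"
      by (simp add: nfilter_join_least[OF nfilter_filter_residual[OF D nfilter_nfilter_join]])
    then show "x \<in> ?J" using x unfolding filter_residual_def by blast
  qed
qed

theorem mainTheorem3:
  fixes n :: nat
  assumes "distributive_msl TYPE('a::semilattice_inf)"
    and "n \<ge> 1"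
  shows "(\<forall>F G :: 'a set. nfilter n F \<and> nfilter n G \<longrightarrow>
            nfilter n (F \<inter> G) \<and>
            nfilter n (nfilter_join n F G) \<and> F \<subseteq> nfilter_join n F G \<and> G \<subseteq> nfilter_join n F G \<and>
            (\<forall>H. nfilter n H \<and> F \<subseteq> H \<and> G \<subseteq> H \<longrightarrow> nfilter_join n F G \<subseteq> H))
       \<and> (\<forall>F G H :: 'a set. nfilter n F \<and> nfilter n G \<and> nfilter n H \<longrightarrow>
            F \<inter> nfilter_join n G H = nfilter_join n (F \<inter> G) (F \<inter> H))"
proof (intro conjI allI impI)
  fix F G :: "'a set" assume "nfilter n F \<and> nfilter n G"
  then show "nfilter n (F \<inter> G)" by (simp add: nfilter_Int)
next
  show "nfilter n (nfilter_join n F G)" for F G :: "'a set" by (rule nfilter_nfilter_join)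
next
  show "F \<subseteq> nfilter_join n F G" "G \<subseteq> nfilter_join n F G" for F G :: "'a set"
    by (rule nfilter_join_upper)+
next
  fix F G H :: "'a set" assume "nfilter n H \<and> F \<subseteq> H \<and> G \<subseteq> H"
  then show "nfilter_join n F G \<subseteq> H" by (simp add: nfilter_join_least)
next
  fix F G H :: "'a set" assume "nfilter n F \<and> nfilter n G \<and> nfilter n H"
  then show "F \<inter> nfilter_join n G H = nfilter_join n (F \<inter> G) (F \<inter> H)"
    by (simp add: nfilter_Int_join_distrib[OF assms(1)])
qed

end
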